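(* Let $G=(V,E)$ be a connected undirected graph on $n\geq 3$ nodes with positive edge weights $w$, and run the distributed algorithm described in the context synchronously at every node. Then every node $v\in V$ computes its betweenness centrality after $2\,\mathcal{D}(G)+1$ phases: at any time after the first $2\,\mathcal{D}(G)+1$ phases have been completed, the variable $C$ held by $v$ equals $\sum_{s\neq v}\mathsf{bc}_v(s)=(n-1)(n-2)\,\mathsf{bc}_v$, i.e. $\mathsf{bc}_v$ up to the normalization factor $1/((n-1)(n-2))$.
   Context: Graph notions. $G=(V,E)$ is connected, undirected, with weights $w(e)>0$; $N(v)$ is the set of neighbors of $v$ and $N[v]=N(v)\cup\{v\}$. The length of a path is the sum of its edge weights; $\mathrm{dist}(s,t)$ is the length of a shortest $s$–$t$ path. For $s\neq t$, $\mathrm{maxhop}(s,t)$ is the maximum number of edges of a shortest (minimum-length) $s$–$t$ path, $\mathrm{maxhop}(s,s)=0$, and $\mathcal{D}(G)=\max_{s,t\in V}\mathrm{maxhop}(s,t)$. $\sigma_{s,t}$ is the number of shortest $s$–$t$ paths ($\sigma_{s,s}=1$) and $\sigma_{s,t}(v)$ the number of those passing through $v$ ($\sigma_{s,s}(s)=1$). For $s\in V$, $\mathsf{bc}_v(s)=\sum_{t\neq v}\sigma_{s,t}(v)/\sigma_{s,t}$, and the betweenness centrality is $\mathsf{bc}_v=\frac{1}{(n-1)(n-2)}\sum_{s\neq v,t\neq v}\sigma_{s,t}(v)/\sigma_{s,t}$. Algorithm (at each node $v$). Initialization: for all $t\in V$: $D[t]=+\infty$, $\mathrm{NH}[t]=\mathrm{PH}[t]=\emptyset$,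 and for all $u\in N[v]$: $B[u,t]=0$, $S[u,t]=0$; then $S[v,v]=1$, $D[v]=0$. Execution proceeds in synchronous phases; in each phase every node $v$ sends, for every $t\in V$, the message $(t,D[t],S[v,t],B[v,t])$ to every neighbor, receives all messages sent to it by its neighbors in that phase, and processes each of them (in arbitrary order) as follows. On receipt of $(t,d,s,b)$ from $u\in N(v)$: remove $u$ from $\mathrm{NH}[t]$ and from $\mathrm{PH}[t]$; if $d+w(\{u,v\})<D[t]$ set $D[t]\leftarrow d+w(\{u,v\})$; else if $d+w(\{u,v\})=D[t]$ add $u$ to $\mathrm{NH}[t]$; else if $d-w(\{u,v\})=D[t]$ add $u$ to $\mathrm{PH}[t]$. Then set $S[u,t]\leftarrow s$, $B[u,t]\leftarrow b$; if $t\neq v$ set $S[v,t]\leftarrow\sum_{x\in\mathrm{NH}[t]}S[x,t]$; set $B[v,t]\leftarrow S[v,t]\cdot\sum_{x\in\mathrm{PH}[t]}\frac{B[x,t]+1}{S[x,t]}$ (a term with $S[x,t]=0$ is taken as $0$); finally set $C\leftarrow\sum_{x\neq v}B[v,x]$. *)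

theory Defs
  imports Complex_Main "HOL-Library.Extended_Real"
begin

definition wgraph :: "'a set \<Rightarrow> 'a set set \<Rightarrow> ('a set \<Rightarrow> real) \<Rightarrow> bool" where
  "wgraph V E w \<longleftrightarrow> finite V \<and>
     (\<forall>e\<in>E. \<exists>x y. e = {x, y} \<and> x \<noteq> y \<and> x \<in> V \<and> y \<in> V) \<and>
     (\<forall>e\<in>E. w e > 0)"

definition nbrs :: "'a set set \<Rightarrow> 'a \<Rightarrow> 'a set" where
  "nbrs E v = {u. {u, v} \<in> E}"

definition is_path :: "'a set \<Rightarrow> 'a set set \<Rightarrow> 'a \<Rightarrow> 'a \<Rightarrow> 'a list \<Rightarrow> bool" where
  "is_path V E s t p \<longleftrightarrow> p \<noteq> [] \<and> hd p = s \<and> last p = t \<and> set p \<subseteq> V \<and> distinct p \<and>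
     (\<forall>i. Suc i < length p \<longrightarrow> {p ! i, p ! Suc i} \<in> E)"

definition connected_graph :: "'a set \<Rightarrow> 'a set set \<Rightarrow> bool" where
  "connected_graph V E \<longleftrightarrow> (\<forall>s\<in>V. \<forall>t\<in>V. \<exists>p. is_path V E s t p)"

definition plen :: "('a set \<Rightarrow> real) \<Rightarrow> 'a list \<Rightarrow> real" where
  "plen w p = (\<Sum>i<length p - 1. w {p ! i, p ! Suc i})"

definition gdist :: "'a set \<Rightarrow> 'a set set \<Rightarrow> ('a set \<Rightarrow> real) \<Rightarrow> 'a \<Rightarrow> 'a \<Rightarrow> real" where
  "gdist V E w s t = Min (plen w ` {p. is_path V E s t p})"

definition spaths :: "'a set \<Rightarrow> 'a set set \<Rightarrow> ('a set \<Rightarrow> real) \<Rightarrow> 'a \<Rightarrow> 'a \<Rightarrow> 'a list set" where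
  "spaths V E w s t = {p. is_path V E s t p \<and> plen w p = gdist V E w s t}"

definition sigma :: "'a set \<Rightarrow> 'a set set \<Rightarrow> ('a set \<Rightarrow> real) \<Rightarrow> 'a \<Rightarrow> 'a \<Rightarrow> nat" where
  "sigma V E w s t = card (spaths V E w s t)"

definition sigma_via :: "'a set \<Rightarrow> 'a set set \<Rightarrow> ('a set \<Rightarrow> real) \<Rightarrow> 'a \<Rightarrow> 'a \<Rightarrow> 'a \<Rightarrow> nat" where
  "sigma_via V E w s t v = card {p \<in> spaths V E w s t. v \<in> set p}"

definition maxhop :: "'a set \<Rightarrow> 'a set set \<Rightarrow> ('a set \<Rightarrow> real) \<Rightarrow> 'a \<Rightarrow> 'a \<Rightarrow> nat" where
  "maxhop V E w s t = (if s = t then 0 else Max ((\<lambda>p. length p - 1) ` spaths V E w s t))"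

definition hopdiam :: "'a set \<Rightarrow> 'a set set \<Rightarrow> ('a set \<Rightarrow> real) \<Rightarrow> nat" where
  "hopdiam V E w = Max ((\<lambda>(s, t). maxhop V E w s t) ` (V \<times> V))"

definition bc_from :: "'a set \<Rightarrow> 'a set set \<Rightarrow> ('a set \<Rightarrow> real) \<Rightarrow> 'a \<Rightarrow> 'a \<Rightarrow> real" where
  "bc_from V E w v s = (\<Sum>t\<in>V - {v}. real (sigma_via V E w s t v) / real (sigma V E w s t))"

definition bc :: "'a set \<Rightarrow> 'a set set \<Rightarrow> ('a set \<Rightarrow> real) \<Rightarrow> 'a \<Rightarrow> real" where
  "bc V E w v = 1 / (real (card V - 1) * real (card V - 2)) *
     (\<Sum>s\<in>V - {v}. \<Sum>t\<in>V - {v}. real (sigma_via V E w s t v) / real (sigma V E w s t))"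

record 'a lstate =
  lD  :: "'a \<Rightarrow> ereal"
  lNH :: "'a \<Rightarrow> 'a set"
  lPH :: "'a \<Rightarrow> 'a set"
  lS  :: "'a \<Rightarrow> 'a \<Rightarrow> real"
  lB  :: "'a \<Rightarrow> 'a \<Rightarrow> real"
  lC  :: real

text \<open>Initial local state of node v (C is not initialized by the algorithm; we take 0).\<close>
definition init_state :: "'a \<Rightarrow> 'a lstate" where
  "init_state v = \<lparr> lD = (\<lambda>t. if t = v then 0 else \<infinity>), lNH = (\<lambda>_. {}), lPH = (\<lambda>_. {}),
      lS = (\<lambda>x t. if x = v \<and> t = v then 1 else 0), lB = (\<lambda>_ _. 0), lC = 0 \<rparr>"

definition upd_dist :: "'a \<Rightarrow> ereal \<Rightarrow> ereal \<Rightarrow> 'a lstate \<Rightarrow> 'a \<Rightarrow> 'a lstate" where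
  "upd_dist u d wuv \<sigma> t =
     (let \<sigma>0 = \<sigma>\<lparr>lNH := (lNH \<sigma>)(t := lNH \<sigma> t - {u}), lPH := (lPH \<sigma>)(t := lPH \<sigma> t - {u})\<rparr> in
      if d + wuv < lD \<sigma>0 t then \<sigma>0\<lparr>lD := (lD \<sigma>0)(t := d + wuv)\<rparr>
      else if d + wuv = lD \<sigma>0 t then \<sigma>0\<lparr>lNH := (lNH \<sigma>0)(t := insert u (lNH \<sigma>0 t))\<rparr>
      else if d - wuv = lD \<sigma>0 t then \<sigma>0\<lparr>lPH := (lPH \<sigma>0)(t := insert u (lPH \<sigma>0 t))\<rparr>
      else \<sigma>0)"

definition recv :: "'a set \<Rightarrow> ('a set \<Rightarrow> real) \<Rightarrow> 'a \<Rightarrow> 'a \<Rightarrow> 'a \<times> ereal \<times> real \<times> real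
                     \<Rightarrow> 'a lstate \<Rightarrow> 'a lstate" where
  "recv V w v u m \<sigma> =
     (case m of (t, d, s, b) \<Rightarrow>
       let \<sigma>1 = upd_dist u d (ereal (w {u, v})) \<sigma> t;
           \<sigma>2 = \<sigma>1\<lparr>lS := (lS \<sigma>1)(u := (lS \<sigma>1 u)(t := s)),
                    lB := (lB \<sigma>1)(u := (lB \<sigma>1 u)(t := b))\<rparr>;
           \<sigma>3 = (if t \<noteq> v then
                   \<sigma>2\<lparr>lS := (lS \<sigma>2)(v := (lS \<sigma>2 v)(t := (\<Sum>x\<in>lNH \<sigma>2 t. lS \<sigma>2 x t)))\<rparr>
                 else \<sigma>2);
           bvt = lS \<sigma>3 v t * (\<Sum>x\<in>lPH \<sigma>3 t.
                   if lS \<sigma>3 x t = 0 then 0 else (lB \<sigma>3 x t + 1) / lS \<sigma>3 x t);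
           \<sigma>4 = \<sigma>3\<lparr>lB := (lB \<sigma>3)(v := (lB \<sigma>3 v)(t := bvt))\<rparr>
       in \<sigma>4\<lparr>lC := (\<Sum>x\<in>V - {v}. lB \<sigma>4 v x)\<rparr>)"

definition msg :: "'a lstate \<Rightarrow> 'a \<Rightarrow> 'a \<Rightarrow> 'a \<times> ereal \<times> real \<times> real" where
  "msg \<sigma> u t = (t, lD \<sigma> t, lS \<sigma> u t, lB \<sigma> u t)"

definition deliver :: "'a set \<Rightarrow> ('a set \<Rightarrow> real) \<Rightarrow> ('a \<Rightarrow> 'a lstate) \<Rightarrow> 'a
                        \<Rightarrow> 'a lstate \<Rightarrow> 'a \<times> 'a \<Rightarrow> 'a lstate" where
  "deliver V w glob v \<sigma> ut = (case ut of (u, t) \<Rightarrow> recv V w v u (msg (glob u) u t) \<sigma>)"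

text \<open>ord k v: the (arbitrary) order in which node v processes the messages of phase k+1;
  each message is identified by its sender u and target t.\<close>
definition valid_orders :: "'a set \<Rightarrow> 'a set set \<Rightarrow> (nat \<Rightarrow> 'a \<Rightarrow> ('a \<times> 'a) list) \<Rightarrow> bool" where
  "valid_orders V E ord \<longleftrightarrow>
     (\<forall>k. \<forall>v\<in>V. distinct (ord k v) \<and> set (ord k v) = nbrs E v \<times> V)"

fun run :: "'a set \<Rightarrow> ('a set \<Rightarrow> real) \<Rightarrow> (nat \<Rightarrow> 'a \<Rightarrow> ('a \<times> 'a) list) \<Rightarrow> nat \<Rightarrow> 'a \<Rightarrow> 'a lstate" where
  "run V w ord 0 = init_state"
| "run V w ord (Suc k) =
     (\<lambda>v. foldl (deliver V w (run V w ord k) v) (run V w ord k v) (ord k v))"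

end

theory Submission
  imports Defs
begin

text \<open>
  For a root r, the shortest r-paths are exactly the walks from r in the shortest-path DAG of r,
  whose edges x \<rightarrow> y are the edges with d(r,y) = d(r,x) + w{x,y}. Hence \<sigma>(r,v) is the sum of
  \<sigma>(r,u) over the DAG predecessors u of v, and Brandes' recurrence
  bc_v(r) = \<sigma>(r,v) \<Sum>_y (bc_y(r) + 1) / \<sigma>(r,y) runs over the DAG successors y of v.
  The distance estimates D of the algorithm follow synchronous Bellman-Ford and are exact after
  \<D> phases; from then on NH and PH are exactly the DAG predecessors and successors, so S carries
  \<sigma> forwards and B carries bc backwards along the DAG. A DAG walk out of v \<noteq> r extends a
  shortest path from r, so it has at most \<D> vertices and B is exact after 2\<D> phases. One more
  phase makes the copies of the neighbours' S and B held by v exact as well, and C, being the sum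
  of the B values, is then exact at every moment.
\<close>

lemma card_UN_image_inj:
  assumes "inj f" "finite I" "\<And>i. i \<in> I \<Longrightarrow> finite (A i)"
    and "\<And>i j. i \<in> I \<Longrightarrow> j \<in> I \<Longrightarrow> i \<noteq> j \<Longrightarrow> A i \<inter> A j = {}"
  shows "card (\<Union>i\<in>I. f ` A i) = (\<Sum>i\<in>I. card (A i))"
proof -
  have "card (\<Union>i\<in>I. f ` A i) = card (\<Union>i\<in>I. A i)"
    using assms(1) by (simp add: image_UN[symmetric] card_image inj_on_subset)
  also have "\<dots> = (\<Sum>i\<in>I. card (A i))"
    using assms(2-4) by (intro card_UN_disjoint) auto
  finally show ?thesis .
qed

section \<open>Shortest paths and the shortest-path DAG\<close>

locale connected_wgraph =
  fixes V :: "'a set" and E :: "'a set set" and w :: "'a set \<Rightarrow> real"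
  assumes wgraph: "wgraph V E w" and connected: "connected_graph V E"
begin

abbreviation adj :: "'a \<Rightarrow> 'a \<Rightarrow> bool" where "adj x y \<equiv> {x, y} \<in> E"

abbreviation d :: "'a \<Rightarrow> 'a \<Rightarrow> real" where "d \<equiv> gdist V E w"

lemma finite_vertices: "finite V"
  using wgraph by (simp add: wgraph_def)

lemma edge_vertices:
  assumes "adj u v"
  shows "u \<in> V" "v \<in> V" "u \<noteq> v"
proof -
  obtain x y where "{u, v} = {x, y}" "x \<noteq> y" "x \<in> V" "y \<in> V"
    using wgraph assms unfolding wgraph_def by metis
  then show "u \<in> V" "v \<in> V" "u \<noteq> v" by (auto simp: doubleton_eq_iff)
qed

lemma weight_pos: "adj u v \<Longrightarrow> w {u, v} > 0"
  using wgraph by (simp add: wgraph_def)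

lemma nbrs_iff: "u \<in> nbrs E v \<longleftrightarrow> adj u v"
  by (simp add: nbrs_def)

lemma nbrs_vertices: "u \<in> nbrs E v \<Longrightarrow> u \<in> V \<and> v \<in> V \<and> u \<noteq> v"
  using edge_vertices by (auto simp: nbrs_def)

fun wlen :: "'a list \<Rightarrow> real" where
  "wlen [] = 0"
| "wlen [x] = 0"
| "wlen (x # y # xs) = w {x, y} + wlen (y # xs)"

lemma plen_eq_wlen: "plen w p = wlen p"
proof (induction p rule: wlen.induct)
  case (3 x y xs)
  have "plen w (x # y # xs) = (\<Sum>i<Suc (length xs). w {(x # y # xs) ! i, (x # y # xs) ! Suc i})"
    by (simp add: plen_def)
  also have "\<dots> = w {x, y} + plen w (y # xs)"
    by (subst sum.lessThan_Suc_shift) (simp add: plen_def)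
  finally show ?case using 3 by simp
qed (auto simp: plen_def)

lemma is_path_iff:
  "is_path V E s t p \<longleftrightarrow>
     p \<noteq> [] \<and> hd p = s \<and> last p = t \<and> set p \<subseteq> V \<and> distinct p \<and> successively adj p"
  by (simp add: is_path_def successively_conv_nth)

lemma wlen_nonneg: "successively adj p \<Longrightarrow> wlen p \<ge> 0"
  by (induction p rule: wlen.induct) (auto intro: add_nonneg_nonneg less_imp_le weight_pos)

lemma wlen_append: "wlen (xs @ y # ys) = wlen (xs @ [y]) + wlen (y # ys)"
  by (induction xs rule: wlen.induct) auto

lemma wlen_snoc: "p \<noteq> [] \<Longrightarrow> wlen (p @ [v]) = wlen p + w {last p, v}"
  by (induction p rule: wlen.induct) auto

lemma finite_distinct_lists: "finite {p. set p \<subseteq> V \<and> distinct p}"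
proof (rule finite_subset)
  show "{p. set p \<subseteq> V \<and> distinct p} \<subseteq> {p. set p \<subseteq> V \<and> length p \<le> card V}"
    using finite_vertices by (auto simp: distinct_card[symmetric] intro: card_mono)
qed (use finite_vertices finite_lists_length_le in blast)

lemma finite_paths: "finite {p. is_path V E s t p}"
  by (rule finite_subset[OF _ finite_distinct_lists]) (auto simp: is_path_iff)

lemma dist_le_wlen: "is_path V E s t p \<Longrightarrow> d s t \<le> wlen p"
  unfolding gdist_def plen_eq_wlen[symmetric] by (rule Min_le) (auto intro: finite_paths)

lemma dist_attained:
  assumes "s \<in> V" "t \<in> V"
  obtains p where "is_path V E s t p" "wlen p = d s t"
proof -
  have "\<exists>p. is_path V E s t p" using connected assms by (simp add: connected_graph_def)
  then have "d s t \<in> plen w ` {p. is_path V E s t p}"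
    unfolding gdist_def using finite_paths by (intro Min_in) auto
  then show ?thesis using that by (auto simp: plen_eq_wlen)
qed

lemma dist_nonneg: "s \<in> V \<Longrightarrow> t \<in> V \<Longrightarrow> d s t \<ge> 0"
  by (metis dist_attained is_path_iff wlen_nonneg)

lemma dist_self:
  assumes "s \<in> V"
  shows "d s s = 0"
proof -
  have "is_path V E s s [s]" using assms by (simp add: is_path_iff)
  then have "d s s \<le> 0" using dist_le_wlen by fastforce
  then show ?thesis using dist_nonneg[OF assms assms] by simp
qed

lemma dist_triangle:
  assumes "s \<in> V" "adj u v"
  shows "d s v \<le> d s u + w {u, v}"
proof -
  have "u \<in> V" "v \<in> V" using edge_vertices assms(2) by auto
  then obtain p where p: "is_path V E s u p" "wlen p = d s u"
    using dist_attained assms(1) by metis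
  show ?thesis
  proof (cases "v \<in> set p")
    case True
    \<comment> \<open>p @ [v] is not simple; the prefix of p ending in v is a shorter path to v\<close>
    then obtain xs ys where p_split: "p = xs @ v # ys" by (meson split_list)
    have "successively adj ((xs @ [v]) @ ys)" using p(1) p_split by (simp add: is_path_iff)
    then have "successively adj (xs @ [v])" "successively adj (v # ys)"
      by (auto simp: successively_append_iff)
    then have "is_path V E s v (xs @ [v])" "wlen (v # ys) \<ge> 0"
      using p(1) wlen_nonneg unfolding is_path_iff p_split by (cases xs; auto)+
    then have "d s v \<le> wlen p"
      using dist_le_wlen wlen_append[of xs v ys] p_split by fastforce
    then show ?thesis using p(2) weight_pos[OF assms(2)] by simp
  next
    case False
    have "is_path V E s v (p @ [v])"
      using p(1) False \<open>v \<in> V\<close> assms(2)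
      unfolding is_path_iff by (auto simp: successively_append_iff)
    then have "d s v \<le> wlen (p @ [v])" by (rule dist_le_wlen)
    then show ?thesis using p by (simp add: wlen_snoc is_path_iff)
  qed
qed

definition sp_edge :: "'a \<Rightarrow> 'a \<Rightarrow> 'a \<Rightarrow> bool" where
  "sp_edge r x y \<longleftrightarrow> adj x y \<and> d r y = d r x + w {x, y}"

definition dag_walk :: "'a \<Rightarrow> 'a \<Rightarrow> 'a \<Rightarrow> 'a list \<Rightarrow> bool" where
  "dag_walk r a b p \<longleftrightarrow>
     p \<noteq> [] \<and> hd p = a \<and> last p = b \<and> set p \<subseteq> V \<and> successively (sp_edge r) p"

definition dag_walks :: "'a \<Rightarrow> 'a \<Rightarrow> 'a \<Rightarrow> 'a list set" where
  "dag_walks r a b = {p. dag_walk r a b p}"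

definition dag_count :: "'a \<Rightarrow> 'a \<Rightarrow> 'a \<Rightarrow> nat" where
  "dag_count r a b = card (dag_walks r a b)"

lemma sp_edge_nbrs: "sp_edge r u v \<Longrightarrow> u \<in> nbrs E v \<and> v \<in> nbrs E u"
  by (auto simp: sp_edge_def nbrs_def insert_commute)

lemma sp_edge_vertices: "sp_edge r u v \<Longrightarrow> u \<in> V \<and> v \<in> V"
  using edge_vertices by (auto simp: sp_edge_def)

lemma sp_edge_dist_less: "sp_edge r u v \<Longrightarrow> d r u < d r v"
  using weight_pos by (auto simp: sp_edge_def)

lemma sp_edge_target_ne_root:
  assumes "r \<in> V" "sp_edge r u v"
  shows "v \<noteq> r"
  using sp_edge_dist_less[OF assms(2)] dist_nonneg[OF assms(1)] dist_self[OF assms(1)]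
    sp_edge_vertices[OF assms(2)] by force

lemma dist_along_walk:
  assumes "r \<in> V" "successively adj p" "p \<noteq> []"
  shows "d r (last p) \<le> d r (hd p) + wlen p \<and>
    (d r (last p) = d r (hd p) + wlen p \<longleftrightarrow> successively (sp_edge r) p)"
  using assms(2,3)
proof (induction p rule: wlen.induct)
  case (3 x y xs)
  then have "d r y \<le> d r x + w {x, y}" using dist_triangle[OF assms(1)] by simp
  with 3 show ?case by (auto simp: sp_edge_def)
qed auto

lemma dag_walk_adj: "dag_walk r a b p \<Longrightarrow> successively adj p"
  unfolding dag_walk_def by (auto elim: successively_mono simp: sp_edge_def)

lemma dag_walk_dist: "r \<in> V \<Longrightarrow> dag_walk r a b p \<Longrightarrow> d r b = d r a + wlen p"
  using dist_along_walk dag_walk_adj by (fastforce simp: dag_walk_def)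

text \<open>Distances from the root strictly increase along a walk of the DAG.\<close>

lemma dag_walk_distinct:
  assumes "dag_walk r a b p"
  shows "distinct p"
proof -
  have "successively (\<lambda>x y. d r x < d r y) p"
    using assms unfolding dag_walk_def by (auto elim!: successively_mono intro: sp_edge_dist_less)
  then have "sorted_wrt (\<lambda>x y. d r x < d r y) p"
    by (subst (asm) successively_conv_sorted_wrt) (auto simp: transp_def)
  then show ?thesis by (induction p) auto
qed

lemma spaths_eq_dag_walks:
  assumes "r \<in> V"
  shows "spaths V E w r t = dag_walks r r t"
proof (intro set_eqI iffI)
  fix p assume "p \<in> spaths V E w r t"
  then show "p \<in> dag_walks r r t"
    using dist_along_walk[OF assms, of p] dist_self[OF assms]
    by (auto simp: spaths_def plen_eq_wlen is_path_iff dag_walks_def dag_walk_def)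
next
  fix p assume "p \<in> dag_walks r r t"
  then show "p \<in> spaths V E w r t"
    using dag_walk_dist[OF assms] dag_walk_distinct dag_walk_adj dist_self[OF assms]
    by (fastforce simp: spaths_def plen_eq_wlen is_path_iff dag_walks_def dag_walk_def)
qed

lemma sigma_eq_dag_count: "r \<in> V \<Longrightarrow> sigma V E w r t = dag_count r r t"
  by (simp add: sigma_def dag_count_def spaths_eq_dag_walks)

lemma finite_dag_walks: "finite (dag_walks r a b)"
  by (rule finite_subset[OF _ finite_distinct_lists])
    (auto simp: dag_walks_def dag_walk_def intro: dag_walk_distinct)

lemma dag_walks_self:
  assumes "a \<in> V"
  shows "dag_walks r a a = {[a]}"
proof (intro set_eqI iffI)
  fix p assume "p \<in> dag_walks r a a"
  then have walk: "dag_walk r a a p" by (simp add: dag_walks_def)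
  then obtain xs where p: "p = a # xs" by (cases p) (auto simp: dag_walk_def)
  have "xs = []"
    using walk dag_walk_distinct[OF walk] last_in_set[of xs]
    by (cases "xs = []") (auto simp: p dag_walk_def)
  then show "p \<in> {[a]}" using p by simp
qed (use assms in \<open>auto simp: dag_walks_def dag_walk_def\<close>)

lemma dag_count_self: "a \<in> V \<Longrightarrow> dag_count r a a = 1"
  by (simp add: dag_count_def dag_walks_self)

lemma dag_walk_exists:
  assumes "r \<in> V" "t \<in> V"
  obtains p where "dag_walk r r t p"
proof -
  obtain p where "is_path V E r t p" "wlen p = d r t" using dist_attained[OF assms] .
  then have "p \<in> dag_walks r r t"
    by (simp add: spaths_eq_dag_walks[OF assms(1), symmetric] spaths_def plen_eq_wlen)
  then show ?thesis using that by (simp add: dag_walks_def)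
qed

lemma dag_count_pos:
  assumes "r \<in> V" "t \<in> V"
  shows "dag_count r r t > 0"
proof -
  obtain p where "dag_walk r r t p" using dag_walk_exists[OF assms] .
  then have "dag_walks r r t \<noteq> {}" by (auto simp: dag_walks_def)
  then show ?thesis by (simp add: dag_count_def card_gt_0_iff finite_dag_walks)
qed

lemma dag_walk_dist_mono: "r \<in> V \<Longrightarrow> dag_walk r a b p \<Longrightarrow> d r a \<le> d r b"
  using dag_walk_dist wlen_nonneg[OF dag_walk_adj] by fastforce

lemma dag_walks_empty_if_closer: "r \<in> V \<Longrightarrow> d r b < d r a \<Longrightarrow> dag_walks r a b = {}"
  using dag_walk_dist_mono by (fastforce simp: dag_walks_def)

lemma dag_walk_length_ge_2: "dag_walk r a b p \<Longrightarrow> a \<noteq> b \<Longrightarrow> length p \<ge> 2"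
  by (cases p rule: remdups_adj.cases) (auto simp: dag_walk_def)

lemma successively_append_Cons_iff:
  "successively P (xs @ v # ys) \<longleftrightarrow> successively P (xs @ [v]) \<and> successively P (v # ys)"
  by (auto simp: successively_append_iff)

lemma dag_walk_split:
  "dag_walk r a b (xs @ v # ys) \<longleftrightarrow> dag_walk r a v (xs @ [v]) \<and> dag_walk r v b (v # ys)"
  using successively_append_Cons_iff[of "sp_edge r" xs v ys] by (cases xs) (auto simp: dag_walk_def)

lemma dag_walk_edge: "dag_walk r x y [x, y] \<longleftrightarrow> sp_edge r x y"
  using sp_edge_vertices by (auto simp: dag_walk_def)

lemma dag_walk_snoc: "dag_walk r a u q \<Longrightarrow> sp_edge r u b \<Longrightarrow> dag_walk r a b (q @ [b])"
  using sp_edge_vertices by (auto simp: dag_walk_def successively_append_iff)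

lemma dag_walk_Cons: "sp_edge r a y \<Longrightarrow> dag_walk r y b q \<Longrightarrow> dag_walk r a b (a # q)"
  using sp_edge_vertices by (auto simp: dag_walk_def successively_Cons)

lemma dag_walk_ends:
  assumes "dag_walk r a b p"
  shows "\<exists>xs. p = xs @ [b]" "\<exists>ys. p = a # ys"
  using assms by (metis append_butlast_last_id dag_walk_def, metis dag_walk_def list.collapse)

lemma dag_walks_disjoint_ends:
  "b \<noteq> b' \<Longrightarrow> dag_walks r a b \<inter> dag_walks r a b' = {}"
  "a \<noteq> a' \<Longrightarrow> dag_walks r a b \<inter> dag_walks r a' b = {}"
  by (auto simp: dag_walks_def dag_walk_def)

lemma dag_walk_append:
  assumes "dag_walk r a v q" "dag_walk r v b q'"
  shows "dag_walk r a b (butlast q @ q')"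
proof -
  obtain xs ys where "q = xs @ [v]" "q' = v # ys" using assms dag_walk_ends by blast
  then show ?thesis using assms dag_walk_split[of r a b xs v ys] by simp
qed

lemma dag_walks_last_edge:
  assumes "a \<noteq> b"
  shows "dag_walks r a b = (\<Union>u\<in>{u. sp_edge r u b}. (\<lambda>q. q @ [b]) ` dag_walks r a u)"
proof (intro set_eqI iffI)
  fix p assume "p \<in> dag_walks r a b"
  then have walk: "dag_walk r a b p" by (simp add: dag_walks_def)
  then obtain q where p: "p = q @ [b]" using dag_walk_ends(1) by blast
  with walk assms obtain xs u where "q = xs @ [u]"
    by (cases q rule: rev_cases) (auto simp: dag_walk_def)
  with walk p have "dag_walk r a u q" "sp_edge r u b"
    using dag_walk_split[of r a b xs u "[b]"] by (auto simp: dag_walk_edge)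
  then show "p \<in> (\<Union>u\<in>{u. sp_edge r u b}. (\<lambda>q. q @ [b]) ` dag_walks r a u)"
    using p by (auto simp: dag_walks_def)
qed (auto simp: dag_walks_def intro: dag_walk_snoc)

lemma dag_walks_first_edge:
  assumes "a \<noteq> b"
  shows "dag_walks r a b = (\<Union>y\<in>{y. sp_edge r a y}. (\<lambda>q. a # q) ` dag_walks r y b)"
proof (intro set_eqI iffI)
  fix p assume "p \<in> dag_walks r a b"
  then have walk: "dag_walk r a b p" by (simp add: dag_walks_def)
  then obtain q where p: "p = a # q" using dag_walk_ends(2) by blast
  with walk assms obtain y ys where "q = y # ys" by (cases q) (auto simp: dag_walk_def)
  with walk p have "sp_edge r a y" "dag_walk r y b q"
    using dag_walk_split[of r a b "[a]" y ys] by (auto simp: dag_walk_edge)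
  then show "p \<in> (\<Union>y\<in>{y. sp_edge r a y}. (\<lambda>q. a # q) ` dag_walks r y b)"
    using p by (auto simp: dag_walks_def)
qed (auto simp: dag_walks_def intro: dag_walk_Cons)

lemma dag_count_last_edge:
  assumes "a \<noteq> b"
  shows "dag_count r a b = (\<Sum>u | sp_edge r u b. dag_count r a u)"
proof -
  have "finite {u. sp_edge r u b}"
    by (rule finite_subset[OF _ finite_vertices]) (auto dest: sp_edge_vertices)
  then show ?thesis
    unfolding dag_count_def dag_walks_last_edge[OF assms]
    by (intro card_UN_image_inj finite_dag_walks dag_walks_disjoint_ends) (auto simp: inj_def)
qed

lemma dag_count_first_edge:
  assumes "a \<noteq> b"
  shows "dag_count r a b = (\<Sum>y | sp_edge r a y. dag_count r y b)"
proof -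
  have "finite {y. sp_edge r a y}"
    by (rule finite_subset[OF _ finite_vertices]) (auto dest: sp_edge_vertices)
  then show ?thesis
    unfolding dag_count_def dag_walks_first_edge[OF assms]
    by (intro card_UN_image_inj finite_dag_walks dag_walks_disjoint_ends) (auto simp: inj_def)
qed

lemma card_dag_walks_through:
  "card {p \<in> dag_walks r a b. v \<in> set p} = dag_count r a v * dag_count r v b"
proof -
  define join :: "'a list \<times> 'a list \<Rightarrow> 'a list" where "join = (\<lambda>(q, q'). butlast q @ q')"
  have join: "join (xs @ [v], v # ys) = xs @ v # ys" for xs ys by (simp add: join_def)
  have "{p \<in> dag_walks r a b. v \<in> set p} = join ` (dag_walks r a v \<times> dag_walks r v b)"
  proof (intro set_eqI iffI)
    fix p assume "p \<in> {p \<in> dag_walks r a b. v \<in> set p}"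
    then obtain xs ys where p: "p = xs @ v # ys" "dag_walk r a b (xs @ v # ys)"
      by (auto simp: dag_walks_def dest: split_list)
    then have "(xs @ [v], v # ys) \<in> dag_walks r a v \<times> dag_walks r v b"
      using dag_walk_split[of r a b xs v ys] by (simp add: dag_walks_def)
    then show "p \<in> join ` (dag_walks r a v \<times> dag_walks r v b)"
      using p(1) join by (intro image_eqI) auto
  next
    fix p assume "p \<in> join ` (dag_walks r a v \<times> dag_walks r v b)"
    then obtain q q' where walks: "dag_walk r a v q" "dag_walk r v b q'" and p: "p = join (q, q')"
      by (auto simp: dag_walks_def)
    obtain xs ys where "q = xs @ [v]" "q' = v # ys"
      using walks dag_walk_ends by blast
    then show "p \<in> {p \<in> dag_walks r a b. v \<in> set p}"
      using walks p dag_walk_split[of r a b xs v ys] by (simp add: dag_walks_def join)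
  qed
  moreover have "inj_on join (dag_walks r a v \<times> dag_walks r v b)"
  proof (rule inj_onI)
    have halves: "\<exists>xs ys. x = (xs @ [v], v # ys)" if "x \<in> dag_walks r a v \<times> dag_walks r v b" for x
      using that dag_walk_ends by (fastforce simp: dag_walks_def)
    fix x y
    assume x: "x \<in> dag_walks r a v \<times> dag_walks r v b" and y: "y \<in> dag_walks r a v \<times> dag_walks r v b"
      and eq: "join x = join y"
    obtain xs ys xs' ys' where x_eq: "x = (xs @ [v], v # ys)" and y_eq: "y = (xs' @ [v], v # ys')"
      using halves[OF x] halves[OF y] by blast
    have "v \<notin> set xs" "v \<notin> set ys"
      using x x_eq dag_walk_split[of r a b xs v ys] dag_walk_distinct[of r a b "xs @ v # ys"]
      by (simp_all add: dag_walks_def)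
    then show "x = y"
      using eq append_Cons_eq_iff[of v xs ys xs' ys'] by (simp add: x_eq y_eq join)
  qed
  ultimately show ?thesis
    by (simp add: card_image card_cartesian_product dag_count_def)
qed

abbreviation \<D> :: nat where "\<D> \<equiv> hopdiam V E w"

lemma dag_walk_length_le_hopdiam:
  assumes "r \<in> V" "dag_walk r r x p"
  shows "length p \<le> Suc \<D>"
proof -
  have x: "x \<in> V" using assms(2) last_in_set[of p] by (auto simp: dag_walk_def)
  have p: "p \<in> spaths V E w r x"
    using assms(2) spaths_eq_dag_walks[OF assms(1)] by (simp add: dag_walks_def)
  have "length p - 1 \<le> maxhop V E w r x"
  proof (cases "r = x")
    case True
    then have "p \<in> dag_walks r r r" using assms(2) by (simp add: dag_walks_def)
    then have "p = [r]" using dag_walks_self[OF assms(1)] by blast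
    then show ?thesis by simp
  next
    case False
    have "finite (spaths V E w r x)" using finite_dag_walks spaths_eq_dag_walks[OF assms(1)] by simp
    then show ?thesis using False p by (simp add: maxhop_def)
  qed
  also have "\<dots> \<le> \<D>"
  proof -
    have "maxhop V E w r x \<in> (\<lambda>(s, t). maxhop V E w s t) ` (V \<times> V)" using x assms(1) by force
    then show ?thesis unfolding hopdiam_def using finite_vertices by (intro Max_ge) auto
  qed
  finally show ?thesis by simp
qed

lemma hopdiam_pos:
  assumes "r \<in> V" "v \<in> V" "v \<noteq> r"
  shows "0 < \<D>"
proof -
  obtain p where p: "dag_walk r r v p" using dag_walk_exists[OF assms(1,2)] .
  have "2 \<le> length p" using dag_walk_length_ge_2[OF p] assms(3) by simp
  moreover have "length p \<le> Suc \<D>" by (rule dag_walk_length_le_hopdiam[OF assms(1) p])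
  ultimately show ?thesis by simp
qed

text \<open>A DAG walk from v \<noteq> r extends a shortest r-v path of at least one edge to a shortest path.\<close>

lemma dag_walk_from_length_le_hopdiam:
  assumes "r \<in> V" "v \<in> V" "v \<noteq> r" "dag_walk r v x p"
  shows "length p \<le> \<D>"
proof -
  obtain q where q: "dag_walk r r v q" using dag_walk_exists[OF assms(1,2)] .
  have "length (butlast q @ p) \<le> Suc \<D>"
    using dag_walk_length_le_hopdiam[OF assms(1) dag_walk_append[OF q assms(4)]] .
  moreover have "length q \<ge> 2" using dag_walk_length_ge_2[OF q] assms(3) by simp
  ultimately show ?thesis by simp
qed

section \<open>Brandes' dependency recurrence\<close>

text \<open>In Brandes' notation this is \<delta>_r(v) / \<sigma>(r,v), where the dependency \<delta>_r(v) is bc_v(r).\<close>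

definition scaled_dependency :: "'a \<Rightarrow> 'a \<Rightarrow> real" where
  "scaled_dependency r v = (\<Sum>t\<in>V - {v}. real (dag_count r v t) / real (dag_count r r t))"

lemma bc_from_eq_scaled_dependency:
  assumes "r \<in> V"
  shows "bc_from V E w v r = real (dag_count r r v) * scaled_dependency r v"
  unfolding bc_from_def sigma_via_def sigma_eq_dag_count[OF assms] spaths_eq_dag_walks[OF assms]
    card_dag_walks_through scaled_dependency_def
  by (simp add: sum_distrib_left)

lemma scaled_dependency_rec:
  assumes "r \<in> V" "v \<in> V"
  shows "scaled_dependency r v =
    (\<Sum>y | sp_edge r v y. 1 / real (dag_count r r y) + scaled_dependency r y)"
proof -
  let ?ratio = "\<lambda>y t. real (dag_count r y t) / real (dag_count r r t)"
  have "scaled_dependency r v = (\<Sum>t\<in>V - {v}. \<Sum>y | sp_edge r v y. ?ratio y t)"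
    unfolding scaled_dependency_def
    by (intro sum.cong refl) (auto simp: dag_count_first_edge[of v] sum_divide_distrib)
  also have "\<dots> = (\<Sum>y | sp_edge r v y. \<Sum>t\<in>V - {v}. ?ratio y t)"
    by (rule sum.swap)
  also have "\<dots> = (\<Sum>y | sp_edge r v y. 1 / real (dag_count r r y) + scaled_dependency r y)"
  proof (intro sum.cong refl)
    fix y assume "y \<in> {y. sp_edge r v y}"
    then have y: "y \<in> V" "dag_count r y v = 0"
      using sp_edge_vertices sp_edge_dist_less dag_walks_empty_if_closer[OF assms(1)]
      by (auto simp: dag_count_def)
    have "(\<Sum>t\<in>V - {v}. ?ratio y t) = (\<Sum>t\<in>V. ?ratio y t)"
      using finite_vertices assms(2) y(2) by (simp add: sum_diff1)
    also have "\<dots> = ?ratio y y + (\<Sum>t\<in>V - {y}. ?ratio y t)"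
      using finite_vertices y(1) by (rule sum.remove)
    finally show "(\<Sum>t\<in>V - {v}. ?ratio y t) = 1 / real (dag_count r r y) + scaled_dependency r y"
      using y(1) by (simp add: dag_count_self scaled_dependency_def)
  qed
  finally show ?thesis .
qed

lemma bc_from_rec:
  assumes "r \<in> V" "v \<in> V"
  shows "bc_from V E w v r =
    real (dag_count r r v) * (\<Sum>y | sp_edge r v y. (bc_from V E w y r + 1) / real (dag_count r r y))"
proof -
  have "1 / real (dag_count r r y) + scaled_dependency r y =
      (bc_from V E w y r + 1) / real (dag_count r r y)" if "sp_edge r v y" for y
    using dag_count_pos[OF assms(1)] sp_edge_vertices[OF that]
    by (simp add: bc_from_eq_scaled_dependency[OF assms(1)] field_simps)
  then show ?thesis
    by (simp add: bc_from_eq_scaled_dependency[OF assms(1)] scaled_dependency_rec[OF assms])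
qed

end

section \<open>Processing messages\<close>

lemma upd_dist_fields:
  "lD (upd_dist u dd c \<sigma> t) = (lD \<sigma>)(t := if dd + c < lD \<sigma> t then dd + c else lD \<sigma> t)"
  "lNH (upd_dist u dd c \<sigma> t) =
     (lNH \<sigma>)(t := if dd + c = lD \<sigma> t then insert u (lNH \<sigma> t) else lNH \<sigma> t - {u})"
  "lPH (upd_dist u dd c \<sigma> t) =
     (lPH \<sigma>)(t := if lD \<sigma> t < dd + c \<and> dd - c = lD \<sigma> t then insert u (lPH \<sigma> t) else lPH \<sigma> t - {u})"
  "lS (upd_dist u dd c \<sigma> t) = lS \<sigma>"
  "lB (upd_dist u dd c \<sigma> t) = lB \<sigma>"
  unfolding upd_dist_def Let_def by (auto simp: fun_eq_iff)

lemma lD_recv: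
  "lD (recv V w v u (t, dd, s, b) \<sigma>) r =
    (if t = r \<and> dd + ereal (w {u, v}) < lD \<sigma> r then dd + ereal (w {u, v}) else lD \<sigma> r)"
  unfolding recv_def Let_def by (simp add: upd_dist_fields)

lemma lNH_recv:
  "lNH (recv V w v u (t, dd, s, b) \<sigma>) r =
    (if t \<noteq> r then lNH \<sigma> r
     else if dd + ereal (w {u, v}) = lD \<sigma> r then insert u (lNH \<sigma> r) else lNH \<sigma> r - {u})"
  unfolding recv_def Let_def by (simp add: upd_dist_fields)

lemma lPH_recv:
  "lPH (recv V w v u (t, dd, s, b) \<sigma>) r =
    (if t \<noteq> r then lPH \<sigma> r
     else if lD \<sigma> r < dd + ereal (w {u, v}) \<and> dd - ereal (w {u, v}) = lD \<sigma> r
     then insert u (lPH \<sigma> r) else lPH \<sigma> r - {u})"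
  unfolding recv_def Let_def by (auto simp: upd_dist_fields)

lemma lS_recv_nonself:
  "x \<noteq> v \<Longrightarrow> lS (recv V w v u (t, dd, s, b) \<sigma>) x r = (if x = u \<and> t = r then s else lS \<sigma> x r)"
  unfolding recv_def Let_def by (simp add: upd_dist_fields)

lemma lB_recv_nonself:
  "x \<noteq> v \<Longrightarrow> lB (recv V w v u (t, dd, s, b) \<sigma>) x r = (if x = u \<and> t = r then b else lB \<sigma> x r)"
  unfolding recv_def Let_def by (simp add: upd_dist_fields)

lemma recv_other_target:
  assumes "t \<noteq> r"
  shows "lS (recv V w v u (t, dd, s, b) \<sigma>) x r = lS \<sigma> x r"
    and "lB (recv V w v u (t, dd, s, b) \<sigma>) x r = lB \<sigma> x r"
  using assms unfolding recv_def Let_def by (auto simp: upd_dist_fields)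

lemma lS_recv_root: "u \<noteq> v \<Longrightarrow> lS (recv V w v u (t, dd, s, b) \<sigma>) v v = lS \<sigma> v v"
  unfolding recv_def Let_def by (simp add: upd_dist_fields)

lemma lC_recv: "lC (recv V w v u m \<sigma>) = (\<Sum>x\<in>V - {v}. lB (recv V w v u m \<sigma>) v x)"
  unfolding recv_def Let_def by (simp add: upd_dist_fields split: prod.split)

lemma lS_recv_self:
  assumes "u \<noteq> v" "t \<noteq> v" "v \<notin> lNH (recv V w v u (t, dd, s, b) \<sigma>) t"
  shows "lS (recv V w v u (t, dd, s, b) \<sigma>) v t =
    (\<Sum>y\<in>lNH (recv V w v u (t, dd, s, b) \<sigma>) t. lS (recv V w v u (t, dd, s, b) \<sigma>) y t)"
  using assms unfolding recv_def Let_def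
  by (simp add: upd_dist_fields(4,5)) (intro sum.cong refl; auto)

lemma lB_recv_self:
  assumes "\<sigma>' = recv V w v u (t, dd, s, b) \<sigma>" "v \<notin> lPH \<sigma>' t"
  shows "lB \<sigma>' v t =
    lS \<sigma>' v t * (\<Sum>y\<in>lPH \<sigma>' t. if lS \<sigma>' y t = 0 then 0 else (lB \<sigma>' y t + 1) / lS \<sigma>' y t)"
proof -
  have "\<exists>\<sigma>3 c. \<sigma>' = \<sigma>3\<lparr>lB := (lB \<sigma>3)(v := (lB \<sigma>3 v)(t := lS \<sigma>3 v t * (\<Sum>x\<in>lPH \<sigma>3 t.
      if lS \<sigma>3 x t = 0 then 0 else (lB \<sigma>3 x t + 1) / lS \<sigma>3 x t))), lC := c\<rparr>"
    unfolding assms(1) recv_def prod.case Let_def by (intro exI) (rule refl)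
  then obtain \<sigma>3 c where "\<sigma>' = \<sigma>3\<lparr>lB := (lB \<sigma>3)(v := (lB \<sigma>3 v)(t := lS \<sigma>3 v t * (\<Sum>x\<in>lPH \<sigma>3 t.
      if lS \<sigma>3 x t = 0 then 0 else (lB \<sigma>3 x t + 1) / lS \<sigma>3 x t))), lC := c\<rparr>"
    by blast
  with assms(2) show ?thesis by (auto intro!: sum.cong)
qed

lemma deliver_Pair:
  "deliver V w g v \<sigma> (u, t) = recv V w v u (t, lD (g u) t, lS (g u) u t, lB (g u) u t) \<sigma>"
  by (simp add: deliver_def msg_def)

context connected_wgraph
begin

text \<open>The relations between the local variables for target r that every receipt re-establishes,
  whatever the order in which messages are processed.\<close>

definition consistent_at :: "'a \<Rightarrow> 'a \<Rightarrow> 'a lstate \<Rightarrow> bool" where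
  "consistent_at r v \<sigma> \<longleftrightarrow> lNH \<sigma> r \<subseteq> nbrs E v \<and> lPH \<sigma> r \<subseteq> nbrs E v \<and>
     lS \<sigma> v r = (if r = v then 1 else (\<Sum>y\<in>lNH \<sigma> r. lS \<sigma> y r)) \<and>
     lB \<sigma> v r =
       lS \<sigma> v r * (\<Sum>y\<in>lPH \<sigma> r. if lS \<sigma> y r = 0 then 0 else (lB \<sigma> y r + 1) / lS \<sigma> y r)"

lemma consistent_at_init: "consistent_at r v (init_state v)"
  by (simp add: consistent_at_def init_state_def)

lemma consistent_at_recv:
  assumes "u \<in> nbrs E v" "consistent_at r v \<sigma>"
  shows "consistent_at r v (recv V w v u (t, dd, s, b) \<sigma>)"
proof (cases "t = r")
  case False
  then have "lS (recv V w v u (t, dd, s, b) \<sigma>) x r = lS \<sigma> x r"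
    "lB (recv V w v u (t, dd, s, b) \<sigma>) x r = lB \<sigma> x r"
    "lNH (recv V w v u (t, dd, s, b) \<sigma>) r = lNH \<sigma> r"
    "lPH (recv V w v u (t, dd, s, b) \<sigma>) r = lPH \<sigma> r" for x
    by (simp_all add: recv_other_target lNH_recv lPH_recv)
  with assms(2) show ?thesis unfolding consistent_at_def by presburger
next
  case True
  let ?\<sigma>' = "recv V w v u (t, dd, s, b) \<sigma>"
  have uv: "u \<noteq> v" and "v \<notin> nbrs E v" using assms(1) nbrs_vertices by blast+
  moreover have links: "lNH ?\<sigma>' r \<subseteq> nbrs E v" "lPH ?\<sigma>' r \<subseteq> nbrs E v"
    using assms True by (auto simp: consistent_at_def lNH_recv lPH_recv)
  ultimately have "v \<notin> lNH ?\<sigma>' r" "v \<notin> lPH ?\<sigma>' r" by blast+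
  then have "lS ?\<sigma>' v r = (if r = v then 1 else (\<Sum>y\<in>lNH ?\<sigma>' r. lS ?\<sigma>' y r))"
    "lB ?\<sigma>' v r = lS ?\<sigma>' v r *
       (\<Sum>y\<in>lPH ?\<sigma>' r. if lS ?\<sigma>' y r = 0 then 0 else (lB ?\<sigma>' y r + 1) / lS ?\<sigma>' y r)"
    using assms(2) True lS_recv_self[OF uv] lS_recv_root[OF uv] lB_recv_self[OF refl]
    by (auto simp: consistent_at_def)
  with links show ?thesis by (simp add: consistent_at_def)
qed

abbreviation process :: "('a \<Rightarrow> 'a lstate) \<Rightarrow> 'a \<Rightarrow> 'a lstate \<Rightarrow> ('a \<times> 'a) list \<Rightarrow> 'a lstate" where
  "process g v \<sigma> xs \<equiv> foldl (deliver V w g v) \<sigma> xs"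

lemma consistent_at_process:
  "set xs \<subseteq> nbrs E v \<times> V \<Longrightarrow> consistent_at r v \<sigma> \<Longrightarrow> consistent_at r v (process g v \<sigma> xs)"
  by (induction xs arbitrary: \<sigma>) (auto simp: deliver_Pair consistent_at_recv)

lemma lC_process:
  "lC \<sigma> = (\<Sum>x\<in>V - {v}. lB \<sigma> v x) \<Longrightarrow>
    lC (process g v \<sigma> xs) = (\<Sum>x\<in>V - {v}. lB (process g v \<sigma> xs) v x)"
  by (induction xs arbitrary: \<sigma>) (auto simp: deliver_Pair lC_recv)

lemma process_stored:
  assumes "u \<noteq> v"
  shows "lS (process g v \<sigma> xs) u r = (if (u, r) \<in> set xs then lS (g u) u r else lS \<sigma> u r)
    \<and> lB (process g v \<sigma> xs) u r = (if (u, r) \<in> set xs then lB (g u) u r else lB \<sigma> u r)"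
proof (induction xs arbitrary: \<sigma>)
  case (Cons x xs)
  obtain u' t where x: "x = (u', t)" by (cases x)
  show ?case
    using Cons.IH[of "deliver V w g v \<sigma> x"] assms
    by (cases "(u, r) \<in> set xs") (auto simp: x deliver_Pair lS_recv_nonself lB_recv_nonself)
qed simp

lemma lD_process_le:
  "lD (process g v \<sigma> xs) r \<le> lD \<sigma> r \<and>
   (\<forall>u. (u, r) \<in> set xs \<longrightarrow> lD (process g v \<sigma> xs) r \<le> lD (g u) r + ereal (w {u, v}))"
proof (induction xs arbitrary: \<sigma>)
  case (Cons x xs)
  obtain u t where x: "x = (u, t)" by (cases x)
  let ?\<sigma>' = "deliver V w g v \<sigma> x"
  have "lD ?\<sigma>' r \<le> lD \<sigma> r" "t = r \<Longrightarrow> lD ?\<sigma>' r \<le> lD (g u) r + ereal (w {u, v})"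
    by (auto simp: x deliver_Pair lD_recv)
  then show ?case using Cons.IH[of ?\<sigma>'] x by (auto intro: order_trans)
qed simp

lemma incoming_estimate_ge:
  assumes "r \<in> V" "u \<in> nbrs E v" "ereal (d r u) \<le> D"
  shows "ereal (d r v) \<le> D + ereal (w {u, v})"
proof -
  have "d r v \<le> d r u + w {u, v}" using dist_triangle[OF assms(1)] assms(2) by (simp add: nbrs_iff)
  then have "ereal (d r v) \<le> ereal (d r u) + ereal (w {u, v})" by simp
  also have "\<dots> \<le> D + ereal (w {u, v})" using assms(3) by (intro add_right_mono)
  finally show ?thesis .
qed

lemma lD_process_ge:
  assumes "r \<in> V" "\<forall>u\<in>nbrs E v. ereal (d r u) \<le> lD (g u) r"
  shows "set xs \<subseteq> nbrs E v \<times> V \<Longrightarrow> ereal (d r v) \<le> lD \<sigma> r \<Longrightarrow> ereal (d r v) \<le> lD (process g v \<sigma> xs) r"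
proof (induction xs arbitrary: \<sigma>)
  case (Cons x xs)
  obtain u t where x: "x = (u, t)" by (cases x)
  have "u \<in> nbrs E v" using Cons.prems x by auto
  then have "ereal (d r v) \<le> lD (g u) r + ereal (w {u, v})"
    using assms(2) by (intro incoming_estimate_ge[OF assms(1)]) auto
  then have "ereal (d r v) \<le> lD (deliver V w g v \<sigma> x) r"
    using Cons.prems(2) by (simp add: x deliver_Pair lD_recv)
  then show ?case using Cons by simp
qed simp

lemma process_links:
  assumes "r \<in> V" "\<forall>u\<in>nbrs E v. ereal (d r u) \<le> lD (g u) r"
  shows "set xs \<subseteq> nbrs E v \<times> V \<Longrightarrow> lD \<sigma> r = ereal (d r v) \<Longrightarrow>
    lD (process g v \<sigma> xs) r = ereal (d r v) \<and>
    (u \<in> lNH (process g v \<sigma> xs) r \<longleftrightarrow>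
      (if (u, r) \<in> set xs then lD (g u) r + ereal (w {u, v}) = ereal (d r v) else u \<in> lNH \<sigma> r)) \<and>
    (u \<in> lPH (process g v \<sigma> xs) r \<longleftrightarrow>
      (if (u, r) \<in> set xs then ereal (d r v) < lD (g u) r + ereal (w {u, v}) \<and>
         lD (g u) r - ereal (w {u, v}) = ereal (d r v) else u \<in> lPH \<sigma> r))"
proof (induction xs arbitrary: \<sigma>)
  case (Cons x xs)
  obtain u' t where x: "x = (u', t)" by (cases x)
  have "u' \<in> nbrs E v" using Cons.prems x by auto
  then have "ereal (d r v) \<le> lD (g u') r + ereal (w {u', v})"
    using assms(2) by (intro incoming_estimate_ge[OF assms(1)]) auto
  then have "lD (deliver V w g v \<sigma> x) r = ereal (d r v)"
    using Cons.prems(2) by (auto simp: x deliver_Pair lD_recv)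
  with Cons show ?case by (auto simp: x deliver_Pair lNH_recv lPH_recv)
qed simp

lemma incoming_estimate_eq_iff:
  assumes "r \<in> V" "u \<in> nbrs E v" "ereal (d r u) \<le> D"
  shows "D + ereal (w {u, v}) = ereal (d r v) \<longleftrightarrow> sp_edge r u v \<and> D = ereal (d r u)"
proof
  assume sum_eq: "D + ereal (w {u, v}) = ereal (d r v)"
  then obtain x where D: "D = ereal x" by (cases D) auto
  have "d r v \<le> d r u + w {u, v}" using dist_triangle[OF assms(1)] assms(2) by (simp add: nbrs_iff)
  then have "x = d r u" using assms(3) sum_eq D by simp
  then show "sp_edge r u v \<and> D = ereal (d r u)"
    using sum_eq D assms(2) by (simp add: sp_edge_def nbrs_iff)
qed (simp add: sp_edge_def)

lemma outgoing_estimate_iff: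
  assumes "u \<in> nbrs E v"
  shows "ereal (d r v) < ereal (d r u) + ereal (w {u, v}) \<and>
      ereal (d r u) - ereal (w {u, v}) = ereal (d r v) \<longleftrightarrow> sp_edge r v u"
  using weight_pos[of u v] assms by (auto simp: sp_edge_def nbrs_iff insert_commute)

lemma lNH_process_eq_preds:
  assumes "r \<in> V" "set xs \<subseteq> nbrs E v \<times> V" "consistent_at r v \<sigma>" "lD \<sigma> r = ereal (d r v)"
    and "\<forall>u\<in>nbrs E v. ereal (d r u) \<le> lD (g u) r"
    and "\<forall>u. sp_edge r u v \<longrightarrow> lD (g u) r = ereal (d r u)"
    and "\<forall>u\<in>nbrs E v. (u, r) \<notin> set xs \<longrightarrow> (u \<in> lNH \<sigma> r \<longleftrightarrow> sp_edge r u v)"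
  shows "lNH (process g v \<sigma> xs) r = {u. sp_edge r u v}"
proof -
  have "u \<in> lNH (process g v \<sigma> xs) r \<longleftrightarrow> sp_edge r u v" if "u \<in> nbrs E v" for u
    using process_links[OF assms(1,5,2,4), of u] incoming_estimate_eq_iff[OF assms(1) that]
      assms(5-7) that by auto
  moreover have "lNH (process g v \<sigma> xs) r \<subseteq> nbrs E v"
    using consistent_at_process[OF assms(2,3)] by (simp add: consistent_at_def)
  ultimately show ?thesis using sp_edge_nbrs by blast
qed

lemma lPH_process_eq_succs:
  assumes "r \<in> V" "set xs \<subseteq> nbrs E v \<times> V" "consistent_at r v \<sigma>" "lD \<sigma> r = ereal (d r v)"
    and "\<forall>u\<in>nbrs E v. lD (g u) r = ereal (d r u)"
    and "\<forall>u\<in>nbrs E v. (u, r) \<notin> set xs \<longrightarrow> (u \<in> lPH \<sigma> r \<longleftrightarrow> sp_edge r v u)"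
  shows "lPH (process g v \<sigma> xs) r = {y. sp_edge r v y}"
proof -
  have lower: "\<forall>u\<in>nbrs E v. ereal (d r u) \<le> lD (g u) r" using assms(5) by simp
  have "u \<in> lPH (process g v \<sigma> xs) r \<longleftrightarrow> sp_edge r v u" if "u \<in> nbrs E v" for u
    using process_links[OF assms(1) lower assms(2,4), of u] outgoing_estimate_iff[OF that]
      assms(5,6) that by auto
  moreover have "lPH (process g v \<sigma> xs) r \<subseteq> nbrs E v"
    using consistent_at_process[OF assms(2,3)] by (simp add: consistent_at_def)
  ultimately show ?thesis using sp_edge_nbrs by blast
qed

lemma lS_eq_dag_count:
  assumes "r \<in> V" "r \<noteq> v" "consistent_at r v \<sigma>" "lNH \<sigma> r = {u. sp_edge r u v}"
    and "\<forall>u. sp_edge r u v \<longrightarrow> lS \<sigma> u r = real (dag_count r r u)"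
  shows "lS \<sigma> v r = real (dag_count r r v)"
proof -
  have "lS \<sigma> v r = (\<Sum>u | sp_edge r u v. lS \<sigma> u r)"
    using assms(2-4) by (simp add: consistent_at_def)
  also have "\<dots> = real (dag_count r r v)"
    using assms(5) dag_count_last_edge[OF assms(2)] by simp
  finally show ?thesis .
qed

lemma lB_eq_bc_from:
  assumes "r \<in> V" "v \<in> V" "consistent_at r v \<sigma>" "lS \<sigma> v r = real (dag_count r r v)"
    and "lPH \<sigma> r = {y. sp_edge r v y}"
    and "\<forall>y. sp_edge r v y \<longrightarrow> lS \<sigma> y r = real (dag_count r r y) \<and> lB \<sigma> y r = bc_from V E w y r"
  shows "lB \<sigma> v r = bc_from V E w v r"
proof -
  have "lB \<sigma> v r = real (dag_count r r v) *
      (\<Sum>y | sp_edge r v y. if lS \<sigma> y r = 0 then 0 else (lB \<sigma> y r + 1) / lS \<sigma> y r)"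
    using assms(3-5) by (simp add: consistent_at_def)
  also have "\<dots> = real (dag_count r r v) *
      (\<Sum>y | sp_edge r v y. (bc_from V E w y r + 1) / real (dag_count r r y))"
    using assms(6) dag_count_pos[OF assms(1)] sp_edge_vertices
    by (intro arg_cong2[where f = "(*)"] sum.cong) auto
  finally show ?thesis using bc_from_rec[OF assms(1,2)] by simp
qed

end

section \<open>Convergence of the synchronous phases\<close>

locale bc_run = connected_wgraph +
  fixes ord :: "nat \<Rightarrow> 'a \<Rightarrow> ('a \<times> 'a) list"
  assumes valid_orders: "valid_orders V E ord"
begin

abbreviation R :: "nat \<Rightarrow> 'a \<Rightarrow> 'a lstate" where "R \<equiv> run V w ord"

lemma set_ord: "v \<in> V \<Longrightarrow> set (ord k v) = nbrs E v \<times> V"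
  using valid_orders by (simp add: valid_orders_def)

lemma run_Suc: "R (Suc k) v = process (R k) v (R k v) (ord k v)"
  by simp

declare run.simps(2) [simp del]

lemma consistent_at_run: "v \<in> V \<Longrightarrow> consistent_at r v (R k v)"
  by (induction k) (simp_all add: run_Suc consistent_at_init consistent_at_process set_ord)

lemma lC_run: "lC (R k v) = (\<Sum>x\<in>V - {v}. lB (R k v) v x)"
  by (induction k) (simp_all add: run_Suc init_state_def lC_process)

lemma lD_run_ge: "r \<in> V \<Longrightarrow> v \<in> V \<Longrightarrow> ereal (d r v) \<le> lD (R k v) r"
proof (induction k arbitrary: v)
  case 0
  then show ?case by (simp add: init_state_def dist_self)
next
  case (Suc k)
  then show ?case
    unfolding run_Suc by (intro lD_process_ge) (auto simp: set_ord dest: nbrs_vertices)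
qed

lemma lD_run_mono: "lD (R (Suc k) v) r \<le> lD (R k v) r"
  unfolding run_Suc using lD_process_le by blast

lemma run_stored:
  assumes "v \<in> V" "r \<in> V" "u \<in> nbrs E v"
  shows "lS (R (Suc k) v) u r = lS (R k u) u r \<and> lB (R (Suc k) v) u r = lB (R k u) u r"
  unfolding run_Suc using process_stored[of u v] assms set_ord[OF assms(1)] nbrs_vertices by auto

text \<open>The estimates D evolve as in synchronous Bellman-Ford.\<close>

lemma lD_run_exact:
  assumes "r \<in> V" "dag_walk r r x p" "length p \<le> Suc k"
  shows "lD (R k x) r = ereal (d r x)"
  using assms(2,3)
proof (induction k arbitrary: x p)
  case 0
  then have "p = [r]" "x = r" by (cases p; auto simp: dag_walk_def)+
  then show ?case using assms(1) by (simp add: init_state_def dist_self)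
next
  case (Suc k)
  have x: "x \<in> V" using Suc.prems(1) last_in_set[of p] by (auto simp: dag_walk_def)
  show ?case
  proof (cases "length p \<le> Suc k")
    case True
    then show ?thesis
      using Suc.IH[OF Suc.prems(1)] lD_run_mono[of k x r] lD_run_ge[OF assms(1) x, of "Suc k"]
      by auto
  next
    case False
    then have "length p = Suc (Suc k)" using Suc.prems(2) by simp
    moreover obtain q where "p = q @ [x]" using dag_walk_ends(1)[OF Suc.prems(1)] by blast
    ultimately obtain q' u where p: "p = q' @ [u, x]" by (cases q rule: rev_cases) auto
    then have "dag_walk r r u (q' @ [u])" and edge: "sp_edge r u x"
      using Suc.prems(1) dag_walk_split[of r r x q' u "[x]"] by (simp_all add: dag_walk_edge)
    moreover have "length (q' @ [u]) \<le> Suc k" using Suc.prems(2) p by simp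
    ultimately have u_exact: "lD (R k u) r = ereal (d r u)" using Suc.IH by blast
    have "(u, r) \<in> set (ord k x)"
      using set_ord[OF x] sp_edge_nbrs[OF edge] assms(1) by auto
    then have "lD (R (Suc k) x) r \<le> lD (R k u) r + ereal (w {u, x})"
      unfolding run_Suc using lD_process_le by blast
    also have "\<dots> = ereal (d r x)" using u_exact edge by (simp add: sp_edge_def)
    finally show ?thesis using lD_run_ge[OF assms(1) x, of "Suc k"] by simp
  qed
qed

lemma lD_run_exact_all:
  assumes "r \<in> V" "u \<in> V" "\<D> \<le> k"
  shows "lD (R k u) r = ereal (d r u)"
proof -
  obtain p where p: "dag_walk r r u p" using dag_walk_exists[OF assms(1,2)] .
  show ?thesis
    using lD_run_exact[OF assms(1) p] dag_walk_length_le_hopdiam[OF assms(1) p] assms(3) by simp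
qed

lemma lNH_run:
  assumes "v \<in> V" "r \<in> V" "lD (R k v) r = ereal (d r v)"
    and "\<forall>u. sp_edge r u v \<longrightarrow> lD (R k u) r = ereal (d r u)"
  shows "lNH (R (Suc k) v) r = {u. sp_edge r u v}"
proof -
  have "\<forall>u\<in>nbrs E v. ereal (d r u) \<le> lD (R k u) r"
    using lD_run_ge[OF assms(2)] nbrs_vertices by blast
  then show ?thesis
    unfolding run_Suc using assms set_ord[OF assms(1)]
    by (intro lNH_process_eq_preds consistent_at_run) auto
qed

lemma lPH_run:
  assumes "v \<in> V" "r \<in> V" "\<D> \<le> k"
  shows "lPH (R (Suc k) v) r = {y. sp_edge r v y}"
proof -
  have "\<forall>u\<in>nbrs E v. lD (R k u) r = ereal (d r u)"
    using lD_run_exact_all[OF assms(2) _ assms(3)] nbrs_vertices by blast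
  then show ?thesis
    unfolding run_Suc using assms set_ord[OF assms(1)]
    by (intro lPH_process_eq_succs consistent_at_run lD_run_exact_all) auto
qed

lemma lS_run:
  assumes "r \<in> V" "v \<in> V" "\<forall>p. dag_walk r r v p \<longrightarrow> length p \<le> k"
  shows "lS (R k v) v r = real (dag_count r r v)"
  using assms(2,3)
proof (induction k arbitrary: v)
  case 0
  obtain p where "dag_walk r r v p" using dag_walk_exists[OF assms(1) 0(1)] .
  then show ?case using 0(2) by (auto simp: dag_walk_def)
next
  case (Suc k)
  show ?case
  proof (cases "v = r")
    case True
    then show ?thesis
      using consistent_at_run[of v r "Suc k"] Suc.prems(1) dag_count_self[OF assms(1)]
      by (simp add: consistent_at_def)
  next
    case False
    have pred_walks: "\<forall>q. dag_walk r r u q \<longrightarrow> length q \<le> k" if "sp_edge r u v" for u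
      using Suc.prems(2) dag_walk_snoc[OF _ that] by fastforce
    have exact: "lD (R k u) r = ereal (d r u)"
      if "u \<in> V" "\<forall>q. dag_walk r r u q \<longrightarrow> length q \<le> Suc k" for u
      using dag_walk_exists[OF assms(1) that(1)] lD_run_exact[OF assms(1)] that(2) by metis
    have "lD (R k u) r = ereal (d r u)" if "sp_edge r u v" for u
      using exact sp_edge_vertices[OF that] pred_walks[OF that] le_SucI by blast
    then have "lNH (R (Suc k) v) r = {u. sp_edge r u v}"
      using Suc.prems by (intro lNH_run assms(1) exact) auto
    moreover have "lS (R (Suc k) v) u r = real (dag_count r r u)" if "sp_edge r u v" for u
      using run_stored[OF Suc.prems(1) assms(1) sp_edge_nbrs[OF that, THEN conjunct1]]
        Suc.IH[OF _ pred_walks[OF that]] sp_edge_vertices[OF that] by simp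
    ultimately show ?thesis
      using lS_eq_dag_count[OF assms(1) _ consistent_at_run[OF Suc.prems(1)]] False by auto
  qed
qed

lemma lS_run_all:
  assumes "r \<in> V" "v \<in> V" "\<D> < k"
  shows "lS (R k v) v r = real (dag_count r r v)"
proof (rule lS_run[OF assms(1,2)], intro allI impI)
  fix p assume "dag_walk r r v p"
  then show "length p \<le> k" using dag_walk_length_le_hopdiam[OF assms(1)] assms(3) by fastforce
qed

text \<open>B at v is exact once the distances have settled and the values have travelled back along
  every DAG walk out of v, one phase per vertex.\<close>

lemma lB_run:
  assumes "r \<in> V" "v \<in> V" "\<forall>x p. dag_walk r v x p \<longrightarrow> \<D> + length p \<le> k"
  shows "lB (R k v) v r = bc_from V E w v r"
  using assms(2,3)
proof (induction k arbitrary: v)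
  case 0
  have "dag_walk r v v [v]" using 0(1) by (simp add: dag_walk_def)
  then show ?case using 0(2) by fastforce
next
  case (Suc k)
  have self: "dag_walk r v v [v]" using Suc.prems(1) by (simp add: dag_walk_def)
  have succ_walks: "\<forall>x p. dag_walk r y x p \<longrightarrow> \<D> + length p \<le> k" if "sp_edge r v y" for y
    using Suc.prems(2) dag_walk_Cons[OF that] by fastforce
  have succ: "lS (R (Suc k) v) y r = real (dag_count r r y) \<and>
      lB (R (Suc k) v) y r = bc_from V E w y r" if "sp_edge r v y" for y
  proof -
    have "dag_walk r v y [v, y]" using that by (simp add: dag_walk_edge)
    then have "y \<in> V" "\<D> < k" using sp_edge_vertices[OF that] Suc.prems(2) by fastforce+
    then show ?thesis
      using run_stored[OF Suc.prems(1) assms(1) sp_edge_nbrs[OF that, THEN conjunct2]]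
        lS_run_all[OF assms(1)] Suc.IH[OF _ succ_walks[OF that]] by simp
  qed
  have "\<D> \<le> k" using Suc.prems(2) self by fastforce
  then show ?case
    using lB_eq_bc_from[OF assms(1) Suc.prems(1) consistent_at_run[OF Suc.prems(1)]
        lS_run_all[OF assms(1) Suc.prems(1)] lPH_run[OF Suc.prems(1) assms(1)]] succ
    by simp
qed

lemma lB_run_all:
  assumes "r \<in> V" "v \<in> V" "v \<noteq> r" "2 * \<D> \<le> k"
  shows "lB (R k v) v r = bc_from V E w v r"
proof (rule lB_run[OF assms(1,2)], intro allI impI)
  fix x p assume "dag_walk r v x p"
  then show "\<D> + length p \<le> k"
    using dag_walk_from_length_le_hopdiam[OF assms(1-3)] assms(4) by fastforce
qed

lemma process_links_after_convergence:
  assumes "v \<in> V" "x \<in> V" "\<D> < p" "set xs \<subseteq> nbrs E v \<times> V"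
  shows "lNH (process (R p) v (R p v) xs) x = {u. sp_edge x u v}"
    and "lPH (process (R p) v (R p v) xs) x = {y. sp_edge x v y}"
proof -
  obtain p' where p': "p = Suc p'" "\<D> \<le> p'" using assms(3) by (cases p) auto
  have exact: "lD (R k u) x = ereal (d x u)" if "u \<in> V" "\<D> \<le> k" for u k
    using lD_run_exact_all[OF assms(2) that] .
  have "lNH (R p v) x = {u. sp_edge x u v}"
    using lNH_run[OF assms(1,2), of p'] exact assms(1) sp_edge_vertices p' by blast
  then show "lNH (process (R p) v (R p v) xs) x = {u. sp_edge x u v}"
    using exact assms nbrs_vertices sp_edge_vertices
    by (intro lNH_process_eq_preds consistent_at_run) auto
  have "lPH (R p v) x = {y. sp_edge x v y}"
    using lPH_run[OF assms(1,2) p'(2)] p'(1) by blast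
  then show "lPH (process (R p) v (R p v) xs) x = {y. sp_edge x v y}"
    using exact assms nbrs_vertices
    by (intro lPH_process_eq_succs consistent_at_run) auto
qed

text \<open>Midway through phase p + 1, v holds the values of u either from the message of this
  phase or from that of phase p; both are exact when p \<ge> 2\<D> + 1.\<close>

lemma process_stored_after_convergence:
  assumes "v \<in> V" "x \<in> V" "u \<in> nbrs E v" "2 * \<D> + 1 \<le> p"
  shows "lS (process (R p) v (R p v) xs) u x = real (dag_count x x u)"
    and "u \<noteq> x \<Longrightarrow> lB (process (R p) v (R p v) xs) u x = bc_from V E w u x"
proof -
  obtain p' where p': "p = Suc p'" "2 * \<D> \<le> p'" using assms(4) by (cases p) auto
  have u: "u \<in> V" "u \<noteq> v" using nbrs_vertices[OF assms(3)] by auto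
  then have "0 < \<D>" using hopdiam_pos[OF assms(1)] by blast
  have prev: "lS (R p v) u x = lS (R p' u) u x" "lB (R p v) u x = lB (R p' u) u x"
    using run_stored[OF assms(1,2,3), of p', folded p'(1)] by auto
  show "lS (process (R p) v (R p v) xs) u x = real (dag_count x x u)"
    using process_stored[OF u(2), of "R p" "R p v" xs x] prev lS_run_all[OF assms(2) u(1)]
      \<open>0 < \<D>\<close> p' by auto
  show "lB (process (R p) v (R p v) xs) u x = bc_from V E w u x" if "u \<noteq> x"
    using process_stored[OF u(2), of "R p" "R p v" xs x] prev lB_run_all[OF assms(2) u(1) that]
      p' by auto
qed

lemma lB_process_after_convergence:
  assumes "v \<in> V" "x \<in> V" "x \<noteq> v" "2 * \<D> + 1 \<le> p" "set xs \<subseteq> nbrs E v \<times> V"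
  shows "lB (process (R p) v (R p v) xs) v x = bc_from V E w v x"
proof -
  let ?\<sigma> = "process (R p) v (R p v) xs"
  have "\<D> < p" using assms(4) by simp
  note links = process_links_after_convergence[OF assms(1,2) this assms(5)]
  note stored = process_stored_after_convergence[OF assms(1,2) _ assms(4), of _ xs]
  have consistent: "consistent_at x v ?\<sigma>"
    using consistent_at_process[OF assms(5) consistent_at_run[OF assms(1)]] .
  have "lS ?\<sigma> v x = real (dag_count x x v)"
    using stored(1) sp_edge_nbrs by (intro lS_eq_dag_count[OF assms(2,3) consistent links(1)]) blast
  moreover have "lS ?\<sigma> y x = real (dag_count x x y) \<and> lB ?\<sigma> y x = bc_from V E w y x"
    if "sp_edge x v y" for y
    using stored[of y] sp_edge_nbrs[OF that] sp_edge_target_ne_root[OF assms(2) that] by simp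
  ultimately show ?thesis
    by (intro lB_eq_bc_from[OF assms(2,1) consistent _ links(2)]) auto
qed
end

lemma sum_bc_from_eq_bc:
  assumes "card V \<ge> 3"
  shows "(\<Sum>s\<in>V - {v}. bc_from V E w v s) = real (card V - 1) * real (card V - 2) * bc V E w v"
  using assms by (simp add: bc_def bc_from_def)

theorem theorem1:
  fixes V :: "'a set" and E :: "'a set set" and w :: "'a set \<Rightarrow> real"
    and ord :: "nat \<Rightarrow> 'a \<Rightarrow> ('a \<times> 'a) list"
  assumes "wgraph V E w" and "connected_graph V E" and "card V \<ge> 3"
    and "valid_orders V E ord"
    and "v \<in> V"
    and "2 * hopdiam V E w + 1 \<le> p"
    and "j \<le> length (ord p v)"
  shows "lC (foldl (deliver V w (run V w ord p) v) (run V w ord p v) (take j (ord p v)))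
           = (\<Sum>s\<in>V - {v}. bc_from V E w v s)
       \<and> (\<Sum>s\<in>V - {v}. bc_from V E w v s) = real (card V - 1) * real (card V - 2) * bc V E w v"
proof
  interpret bc_run V E w ord using assms(1,2,4) by unfold_locales
  let ?xs = "take j (ord p v)"
  have xs: "set ?xs \<subseteq> nbrs E v \<times> V" using set_ord[OF assms(5)] set_take_subset by metis
  have "lC (process (R p) v (R p v) ?xs) = (\<Sum>x\<in>V - {v}. lB (process (R p) v (R p v) ?xs) v x)"
    by (rule lC_process) (rule lC_run)
  also have "\<dots> = (\<Sum>x\<in>V - {v}. bc_from V E w v x)"
    using lB_process_after_convergence[OF assms(5) _ _ assms(6) xs] by (intro sum.cong) auto
  finally show "lC (process (R p) v (R p v) ?xs) = (\<Sum>s\<in>V - {v}. bc_from V E w v s)" .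
qed (rule sum_bc_from_eq_bc[OF assms(3)])

end
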